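(* Let $V_0=\mathbb{C}[x_1,x_2,\dots]$ with each $x_i$ primitive, let $A$ be a commutative $\mathbb{C}$-algebra, let $r$ be an $A$-valued bicharacter on $V_0$, and put $q_{mn}=r(x_m\otimes x_n)\in A$ for $m,n\ge1$. Then the map $\mathrm{EQ}_r\colon V_0\to V_0\otimes A$, $f\mapsto \sum r(f'\otimes f'')f'''$, is the exponential of the infinite order quadratic differential operator \[ Q_p=\sum_{m,n\ge1}q_{mn}\frac{\partial^2}{\partial x_m\partial x_n}, \] i.e. $\mathrm{EQ}_r(f)=e^{Q_p}(f)$ for all $f\in V_0$.
   Context: The Hopf structure on $V_0$: $\Delta(x_i)=x_i\otimes 1+1\otimes x_i$, $\eta(x_i)=0$, $S(x_i)=-x_i$. Sweedler notation: $\Delta(f)=\sum f'\otimes f''$, $\Delta^2(f)=\sum f'\otimes f''\otimes f'''$. An $A$-valued bicharacter on $V_0$ is a linear map $r:V_0\otimes V_0\to A$ with $r(1\otimes a)=\eta(a)=r(a\otimes 1)$, $r(ab\otimes c)=\sum r(a\otimes c')r(b\otimes c'')$, $r(a\otimes bc)=\sum r(a'\otimes b)r(a''\otimes c)$. The operator $e^{Q_p}=\sum_{k\ge0}Q_p^k/k!$ acts on polynomials (locally finitely, since $Q_p$ lowers degree by 2), $A$-linearly. *)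

theory Defs
  imports Complex_Main "HOL-Library.Poly_Mapping" "HOL-Library.Product_Plus"
begin

text \<open>Monomials in the variables x_i (i :: nat): exponent vectors.\<close>
type_synonym mon = "nat \<Rightarrow>\<^sub>0 nat"

text \<open>V_0 = C[x_1,x_2,...]; V_0 (x) V_0 and V_0 (x) V_0 (x) V_0 as the polynomial
  algebras on the product monomial bases (multiplication = convolution, i.e.
  the tensor product algebra structure).\<close>
type_synonym V0 = "mon \<Rightarrow>\<^sub>0 complex"
type_synonym V0V0 = "(mon \<times> mon) \<Rightarrow>\<^sub>0 complex"
type_synonym V0V0V0 = "(mon \<times> mon \<times> mon) \<Rightarrow>\<^sub>0 complex"
text \<open>V_0 (x) A = A[x_1,x_2,...].\<close>
type_synonym 'a V0A = "mon \<Rightarrow>\<^sub>0 'a"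

definition var :: "nat \<Rightarrow> V0" where
  "var i = Poly_Mapping.single (Poly_Mapping.single i 1) 1"

definition mono :: "mon \<Rightarrow> V0" where
  "mono \<alpha> = Poly_Mapping.single \<alpha> 1"

text \<open>Evaluation (substitution) of a polynomial in V_0: the unique algebra map
  sending scalars through h and x_i to s i.\<close>
definition peval :: "(complex \<Rightarrow> 'b::comm_semiring_1) \<Rightarrow> (nat \<Rightarrow> 'b) \<Rightarrow> V0 \<Rightarrow> 'b" where
  "peval h s f = (\<Sum>\<alpha>\<in>Poly_Mapping.keys f. h (Poly_Mapping.lookup f \<alpha>) * (\<Prod>i\<in>Poly_Mapping.keys \<alpha>. s i ^ Poly_Mapping.lookup (\<alpha>::mon) (i::nat)))"

definition Delta :: "V0 \<Rightarrow> V0V0" where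
  "Delta f = peval (\<lambda>c. Poly_Mapping.single 0 c)
     (\<lambda>i. Poly_Mapping.single (Poly_Mapping.single i 1, 0) 1
        + Poly_Mapping.single (0, Poly_Mapping.single i 1) 1) f"

text \<open>Iterated coproduct Delta^2 = (Delta (x) id) o Delta, the algebra map with
  x_i \<mapsto> x_i(x)1(x)1 + 1(x)x_i(x)1 + 1(x)1(x)x_i.\<close>
definition Delta2 :: "V0 \<Rightarrow> V0V0V0" where
  "Delta2 f = peval (\<lambda>c. Poly_Mapping.single 0 c)
     (\<lambda>i. Poly_Mapping.single (Poly_Mapping.single i 1, 0, 0) 1
        + Poly_Mapping.single (0, Poly_Mapping.single i 1, 0) 1
        + Poly_Mapping.single (0, 0, Poly_Mapping.single i 1) 1) f"

definition counit :: "V0 \<Rightarrow> complex" where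
  "counit f = peval (\<lambda>c. c) (\<lambda>_. 0) f"

definition tens :: "V0 \<Rightarrow> V0 \<Rightarrow> V0V0" where
  "tens a b = (\<Sum>\<alpha>\<in>Poly_Mapping.keys a. \<Sum>\<beta>\<in>Poly_Mapping.keys b.
      Poly_Mapping.single (\<alpha>, \<beta>) (Poly_Mapping.lookup a \<alpha> * Poly_Mapping.lookup b \<beta>))"

text \<open>Sweedler sum: for u = \<Sum> u' (x) u'' in V_0 (x) V_0 and a C-bilinear map
  Phi : V_0 \<times> V_0 \<rightarrow> A (A a C-algebra via emb), the value \<Sum> Phi(u',u'').\<close>
definition sweedler2 :: "(complex \<Rightarrow> 'a::comm_ring_1) \<Rightarrow> (V0 \<Rightarrow> V0 \<Rightarrow> 'a) \<Rightarrow> V0V0 \<Rightarrow> 'a" where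
  "sweedler2 emb \<Phi> u = (\<Sum>p\<in>Poly_Mapping.keys u. emb (Poly_Mapping.lookup u p) * \<Phi> (mono (fst p)) (mono (snd p)))"

text \<open>A commutative C-algebra A: a commutative ring with a unital ring homomorphism
  emb : C \<rightarrow> A (the structure map).\<close>
definition calg_hom :: "(complex \<Rightarrow> 'a::comm_ring_1) \<Rightarrow> bool" where
  "calg_hom emb \<longleftrightarrow> emb 1 = 1 \<and> (\<forall>x y. emb (x + y) = emb x + emb y) \<and>
     (\<forall>x y. emb (x * y) = emb x * emb y)"

definition clinear2 :: "(complex \<Rightarrow> 'a::comm_ring_1) \<Rightarrow> (V0V0 \<Rightarrow> 'a) \<Rightarrow> bool" where
  "clinear2 emb r \<longleftrightarrow> (\<forall>u v. r (u + v) = r u + r v) \<and>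
     (\<forall>c u. r (Poly_Mapping.single 0 c * u) = emb c * r u)"

definition bichar :: "(complex \<Rightarrow> 'a::comm_ring_1) \<Rightarrow> (V0V0 \<Rightarrow> 'a) \<Rightarrow> bool" where
  "bichar emb r \<longleftrightarrow> clinear2 emb r \<and>
     (\<forall>a. r (tens 1 a) = emb (counit a) \<and> r (tens a 1) = emb (counit a)) \<and>
     (\<forall>a b c. r (tens (a * b) c) = sweedler2 emb (\<lambda>c' c''. r (tens a c') * r (tens b c'')) (Delta c)) \<and>
     (\<forall>a b c. r (tens a (b * c)) = sweedler2 emb (\<lambda>a' a''. r (tens a' b) * r (tens a'' c)) (Delta a))"

text \<open>EQ_r(f) = \<Sum> r(f' (x) f'') f''' in V_0 (x) A = A[x].\<close>
definition EQ :: "(complex \<Rightarrow> 'a::comm_ring_1) \<Rightarrow> (V0V0 \<Rightarrow> 'a) \<Rightarrow> V0 \<Rightarrow> 'a V0A" where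
  "EQ emb r f = (let u = Delta2 f in
     (\<Sum>p\<in>Poly_Mapping.keys u. case p of (\<alpha>, \<beta>, \<gamma>) \<Rightarrow>
        Poly_Mapping.single \<gamma> (emb (Poly_Mapping.lookup u p) * r (tens (mono \<alpha>) (mono \<beta>)))))"

text \<open>f \<mapsto> f (x) 1, V_0 \<rightarrow> V_0 (x) A.\<close>
definition base_ext :: "(complex \<Rightarrow> 'a::comm_ring_1) \<Rightarrow> V0 \<Rightarrow> 'a V0A" where
  "base_ext emb f = (\<Sum>\<alpha>\<in>Poly_Mapping.keys f. Poly_Mapping.single \<alpha> (emb (Poly_Mapping.lookup f \<alpha>)))"

definition pderiv_var :: "nat \<Rightarrow> 'a::comm_ring_1 V0A \<Rightarrow> 'a V0A" where
  "pderiv_var i p = (\<Sum>\<alpha>\<in>Poly_Mapping.keys p.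
      Poly_Mapping.single (\<alpha> - Poly_Mapping.single i 1) (of_nat (Poly_Mapping.lookup \<alpha> i) * Poly_Mapping.lookup p \<alpha>))"

definition vars :: "'a::zero V0A \<Rightarrow> nat set" where
  "vars p = (\<Union>\<alpha>\<in>Poly_Mapping.keys p. Poly_Mapping.keys \<alpha>)"

text \<open>Q_p = \<Sum>_{m,n} q m n d^2/(dx_m dx_n); on a given polynomial only the finitely
  many variables occurring in it contribute.\<close>
definition Qop :: "(nat \<Rightarrow> nat \<Rightarrow> 'a::comm_ring_1) \<Rightarrow> 'a V0A \<Rightarrow> 'a V0A" where
  "Qop q p = (\<Sum>m\<in>vars p. \<Sum>n\<in>vars p.
      Poly_Mapping.single 0 (q m n) * pderiv_var m (pderiv_var n p))"

definition tdeg :: "'a::zero V0A \<Rightarrow> nat" where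
  "tdeg p = Max (insert 0 ((\<lambda>\<alpha>. sum (Poly_Mapping.lookup \<alpha>) (Poly_Mapping.keys \<alpha>)) ` Poly_Mapping.keys p))"

text \<open>e^{Q} = \<Sum>_k Q^k/k!, a finite sum on each polynomial (Q lowers degree by 2,
  so Q^k p = 0 for k > tdeg p); 1/k! acts through the C-algebra structure.\<close>
definition expQ :: "(complex \<Rightarrow> 'a::comm_ring_1) \<Rightarrow> (nat \<Rightarrow> nat \<Rightarrow> 'a) \<Rightarrow> 'a V0A \<Rightarrow> 'a V0A" where
  "expQ emb q p = (\<Sum>k\<le>tdeg p.
      Poly_Mapping.single 0 (emb (1 / of_nat (fact k))) * (Qop q ^^ k) p)"

end

theory Submission
  imports Defs
begin

text \<open>Both sides are linear in \<open>f\<close>, so it suffices to compare them on monomials \<open>x\<^sup>\<alpha>\<close>, by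
  induction on the degree. Since \<open>EQ(x\<^sup>\<alpha>) = (r \<otimes> id)(\<Delta>\<^sup>2 x\<^sup>\<alpha>)\<close> and \<open>\<Delta>\<^sup>2 x\<^sub>i = x\<^sub>i\<otimes>1\<otimes>1 + 1\<otimes>x\<^sub>i\<otimes>1 + 1\<otimes>1\<otimes>x\<^sub>i\<close>,
  multiplying \<open>x\<^sup>\<alpha>\<close> by \<open>x\<^sub>i\<close> produces three terms. The last one is \<open>x\<^sub>i EQ(x\<^sup>\<alpha>)\<close>. In the other two
  the bicharacter axioms give \<open>r(x\<^sub>i a \<otimes> b) = \<Sum>\<^sub>n q\<^sub>i\<^sub>n r(a \<otimes> \<partial>\<^sub>n b)\<close> and its mirror image, because
  \<open>r(x\<^sub>i \<otimes> -)\<close> vanishes on every monomial other than a variable. Hence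
  \<open>EQ(x\<^sub>i x\<^sup>\<alpha>) = x\<^sub>i EQ(x\<^sup>\<alpha>) + D\<^sub>i EQ(x\<^sup>\<alpha>)\<close> with \<open>D\<^sub>i = \<Sum>\<^sub>n (q\<^sub>i\<^sub>n + q\<^sub>n\<^sub>i) \<partial>\<^sub>n = [Q, x\<^sub>i]\<close>.
  Since \<open>D\<^sub>i\<close> commutes with \<open>Q\<close>, also \<open>e\<^sup>Q x\<^sub>i = x\<^sub>i e\<^sup>Q + D\<^sub>i e\<^sup>Q\<close>, which closes the induction.
  Throughout, \<open>Q\<close> is replaced by its restriction to the finitely many variables of \<open>f\<close> and
  \<open>e\<^sup>Q\<close> by a truncated exponential; both agree with the originals because \<open>Q\<close> lowers the
  degree.\<close>

abbreviation lookup where "lookup \<equiv> Poly_Mapping.lookup"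
abbreviation keys where "keys \<equiv> Poly_Mapping.keys"
abbreviation single where "single \<equiv> Poly_Mapping.single"

section \<open>Finitely supported functions\<close>

lemma poly_mapping_sum_singles: "(\<Sum>p\<in>keys u. single p (lookup u p)) = u"
  by (rule poly_mapping_eqI) (simp add: lookup_sum lookup_single when_def in_keys_iff)

lemma additive_map_sum:
  assumes "\<And>a b. L (a + b) = L a + L b" and "L 0 = 0"
  shows "L (sum f S) = (\<Sum>x\<in>S. L (f x))"
  using assms by (induction S rule: infinite_finite_induct) simp_all

lemma additive_map_of_nat_mult:
  fixes L :: "'r::comm_semiring_1 \<Rightarrow> 's::comm_semiring_1"
  assumes "\<And>a b. L (a + b) = L a + L b" and "L 0 = 0"
  shows "L (of_nat k * u) = of_nat k * L u"
  using assms by (induction k) (simp_all add: distrib_right)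

lemma additive_maps_eqI:
  fixes u :: "'k \<Rightarrow>\<^sub>0 'v::comm_monoid_add" and L M :: "('k \<Rightarrow>\<^sub>0 'v) \<Rightarrow> 'w::comm_monoid_add"
  assumes "\<And>a b. L (a + b) = L a + L b" "L 0 = 0"
    and "\<And>a b. M (a + b) = M a + M b" "M 0 = 0"
    and "\<And>p. p \<in> keys u \<Longrightarrow> L (single p (lookup u p)) = M (single p (lookup u p))"
  shows "L u = M u"
proof -
  have "L u = (\<Sum>p\<in>keys u. L (single p (lookup u p)))"
    by (subst poly_mapping_sum_singles[symmetric]) (rule additive_map_sum[OF assms(1,2)])
  also have "\<dots> = (\<Sum>p\<in>keys u. M (single p (lookup u p)))"
    using assms(5) by simp
  also have "\<dots> = M u"
    by (subst (2) poly_mapping_sum_singles[symmetric]) (rule additive_map_sum[OF assms(3,4), symmetric])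
  finally show ?thesis .
qed

lemma sum_keys_lookup_superset:
  assumes "finite S" "keys u \<subseteq> S" "\<And>p. \<phi> p 0 = 0"
  shows "(\<Sum>p\<in>keys u. \<phi> p (lookup u p)) = (\<Sum>p\<in>S. \<phi> p (lookup u p))"
  by (rule sum.mono_neutral_left) (use assms in \<open>auto simp: in_keys_iff\<close>)

lemma sum_keys_lookup_add:
  assumes "\<And>p. \<phi> p 0 = 0" "\<And>p x y. \<phi> p (x + y) = \<phi> p x + \<phi> p y"
  shows "(\<Sum>p\<in>keys (u + v). \<phi> p (lookup (u + v) p))
    = (\<Sum>p\<in>keys u. \<phi> p (lookup u p)) + (\<Sum>p\<in>keys v. \<phi> p (lookup v p))"
proof -
  let ?S = "keys u \<union> keys v"
  have "(\<Sum>p\<in>keys (u + v). \<phi> p (lookup (u + v) p)) = (\<Sum>p\<in>?S. \<phi> p (lookup (u + v) p))"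
    by (rule sum_keys_lookup_superset) (use keys_add[of u v] assms(1) in auto)
  also have "\<dots> = (\<Sum>p\<in>?S. \<phi> p (lookup u p)) + (\<Sum>p\<in>?S. \<phi> p (lookup v p))"
    by (simp add: lookup_add assms(2) sum.distrib)
  also have "\<dots> = (\<Sum>p\<in>keys u. \<phi> p (lookup u p)) + (\<Sum>p\<in>keys v. \<phi> p (lookup v p))"
    using sum_keys_lookup_superset[of ?S u \<phi>] sum_keys_lookup_superset[of ?S v \<phi>] assms(1) by auto
  finally show ?thesis .
qed

lemma sum_keys_lookup_single:
  assumes "\<And>p. \<phi> p 0 = 0"
  shows "(\<Sum>p\<in>keys (single k c). \<phi> p (lookup (single k c) p)) = \<phi> k c"
  using assms by (simp add: lookup_single)

lemma single_sum: "single k (sum f S) = (\<Sum>x\<in>S. single k (f x))"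
  by (rule additive_map_sum) (simp_all add: single_add)

section \<open>Monomials\<close>

definition unit_mon :: "nat \<Rightarrow> mon" where
  "unit_mon i = single i 1"

lemma single_one_eq_unit_mon [simp]: "single i (1::nat) = unit_mon i" "single i (Suc 0) = unit_mon i"
  unfolding unit_mon_def by simp_all

lemma lookup_unit_mon [simp]: "lookup (unit_mon i) n = (if i = n then 1 else 0)"
  by (simp add: unit_mon_def lookup_single del: single_one_eq_unit_mon)

lemma keys_unit_mon [simp]: "keys (unit_mon i) = {i}"
  by (simp add: unit_mon_def del: single_one_eq_unit_mon)

lemma unit_mon_eq_iff [simp]: "unit_mon m = unit_mon n \<longleftrightarrow> m = n"
  by (metis lookup_unit_mon one_neq_zero)

lemma unit_mon_neq_zero [simp]: "unit_mon i \<noteq> 0" "0 \<noteq> unit_mon i"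
  by (metis lookup_unit_mon lookup_zero one_neq_zero)+

lemma unit_mon_add_neq_zero [simp]: "unit_mon i + \<mu> \<noteq> 0" "\<mu> + unit_mon i \<noteq> 0"
  by (metis lookup_add lookup_unit_mon lookup_zero add_is_0 one_neq_zero)+

lemma unit_mon_add_eq_unit_mon_iff: "unit_mon m + \<nu> = unit_mon n \<longleftrightarrow> m = n \<and> \<nu> = 0"
proof
  assume "unit_mon m + \<nu> = unit_mon n"
  then have eq: "(if m = k then 1 else 0) + lookup \<nu> k = (if n = k then 1 else 0)" for k
    using lookup_add[of "unit_mon m" \<nu> k] by simp
  from eq[of m] have "m = n"
    by (cases "n = m") auto
  then have "lookup \<nu> k = 0" for k
    using eq[of k] by simp
  with \<open>m = n\<close> show "m = n \<and> \<nu> = 0"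
    by (simp add: poly_mapping_eqI)
qed simp

lemma keys_add_mon: "keys (\<alpha> + \<beta>) = keys \<alpha> \<union> keys (\<beta> :: mon)"
  by (auto simp: in_keys_iff lookup_add)

lemma diff_unit_mon_add: "0 < lookup \<alpha> i \<Longrightarrow> (\<alpha> - unit_mon i) + unit_mon i = \<alpha>"
  by (rule poly_mapping_eqI) (auto simp: lookup_add lookup_minus)

lemma add_unit_mon_diff: "(\<alpha> + unit_mon i) - unit_mon n = (if i = n then \<alpha> else (\<alpha> - unit_mon n) + unit_mon i)"
  by (rule poly_mapping_eqI) (auto simp: lookup_add lookup_minus)

lemma diff_unit_mon_eq_0_iff: "lookup \<alpha> i \<noteq> 0 \<Longrightarrow> \<alpha> - unit_mon i = 0 \<longleftrightarrow> \<alpha> = unit_mon i"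
  using diff_unit_mon_add[of \<alpha> i] by (auto simp: add_unit_mon_diff)

lemma add_diff_unit_mon_right: "0 < lookup \<alpha> n \<Longrightarrow> (\<beta>::mon) + \<alpha> - unit_mon n = \<beta> + (\<alpha> - unit_mon n)"
  by (rule poly_mapping_eqI) (auto simp: lookup_add lookup_minus)

lemma keys_diff_unit_mon: "keys (\<alpha> - unit_mon i) \<subseteq> keys \<alpha>"
  by (auto simp: in_keys_iff lookup_minus)

definition mon_deg :: "mon \<Rightarrow> nat" where
  "mon_deg \<alpha> = sum (lookup \<alpha>) (keys \<alpha>)"

lemma mon_deg_superset: "finite S \<Longrightarrow> keys \<alpha> \<subseteq> S \<Longrightarrow> mon_deg \<alpha> = sum (lookup \<alpha>) S"
  unfolding mon_deg_def by (rule sum.mono_neutral_left) (auto simp: in_keys_iff)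

lemma mon_deg_zero [simp]: "mon_deg 0 = 0"
  by (simp add: mon_deg_def)

lemma mon_deg_eq_0_iff: "mon_deg \<alpha> = 0 \<longleftrightarrow> \<alpha> = 0"
  unfolding mon_deg_def by (metis finite_keys in_keys_iff keys_eq_empty sum_eq_0_iff ex_in_conv)

lemma mon_deg_add_unit_mon [simp]: "mon_deg (\<alpha> + unit_mon i) = Suc (mon_deg \<alpha>)"
proof -
  let ?S = "insert i (keys \<alpha>)"
  have "mon_deg (\<alpha> + unit_mon i) = sum (lookup \<alpha>) ?S + sum (\<lambda>j. if i = j then 1 else 0) ?S"
    by (subst mon_deg_superset[of ?S]) (auto simp: keys_add_mon lookup_add sum.distrib)
  also have "sum (lookup \<alpha>) ?S = mon_deg \<alpha>"
    by (rule mon_deg_superset[symmetric]) auto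
  finally show ?thesis by simp
qed

lemma mon_deg_diff_unit_mon: "0 < lookup \<alpha> i \<Longrightarrow> mon_deg (\<alpha> - unit_mon i) = mon_deg \<alpha> - 1"
  using mon_deg_add_unit_mon[of "\<alpha> - unit_mon i" i] diff_unit_mon_add[of \<alpha> i] by simp

lemma lookup_le_mon_deg: "lookup \<alpha> n \<le> mon_deg \<alpha>"
  by (cases "n \<in> keys \<alpha>") (auto simp: mon_deg_def in_keys_iff intro: member_le_sum)

lemma mon_induct [case_names zero add_unit]:
  assumes "P 0" "\<And>\<alpha> i. P \<alpha> \<Longrightarrow> P (\<alpha> + unit_mon i)"
  shows "P \<alpha>"
proof (induction "mon_deg \<alpha>" arbitrary: \<alpha>)
  case 0
  then show ?case using assms(1) mon_deg_eq_0_iff by simp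
next
  case (Suc d)
  then obtain i where "i \<in> keys \<alpha>" by (metis keys_eq_empty ex_in_conv mon_deg_zero nat.distinct(1))
  then have pos: "0 < lookup \<alpha> i" by (simp add: in_keys_iff)
  have "P (\<alpha> - unit_mon i)" using Suc mon_deg_diff_unit_mon[OF pos] by simp
  then show ?case using assms(2) diff_unit_mon_add[OF pos] by metis
qed

lemma mon_cases:
  obtains "\<mu> = 0" | m where "\<mu> = unit_mon m" | m \<nu> where "\<mu> = unit_mon m + \<nu>" "\<nu> \<noteq> 0"
proof (cases "\<mu> = 0")
  case False
  then obtain m where "0 < lookup \<mu> m"
    by (metis keys_eq_empty ex_in_conv in_keys_iff gr0I)
  then have "\<mu> = unit_mon m + (\<mu> - unit_mon m)"
    using diff_unit_mon_add[of \<mu> m] by (simp add: add.commute)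
  with that show ?thesis by (cases "\<mu> - unit_mon m = 0") auto
qed

definition mon_eval :: "(nat \<Rightarrow> 'b::comm_semiring_1) \<Rightarrow> mon \<Rightarrow> 'b" where
  "mon_eval s \<alpha> = (\<Prod>i\<in>keys \<alpha>. s i ^ lookup \<alpha> i)"

lemma mon_eval_zero [simp]: "mon_eval s 0 = 1"
  by (simp add: mon_eval_def)

lemma mon_eval_add_unit_mon: "mon_eval s (\<alpha> + unit_mon i) = s i * mon_eval s \<alpha>"
proof -
  let ?S = "insert i (keys \<alpha>)"
  have sup: "mon_eval s \<beta> = (\<Prod>j\<in>?S. s j ^ lookup \<beta> j)" if "keys \<beta> \<subseteq> ?S" for \<beta>
    unfolding mon_eval_def by (rule prod.mono_neutral_left) (use that in \<open>auto simp: in_keys_iff\<close>)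
  have "mon_eval s (\<alpha> + unit_mon i) = (\<Prod>j\<in>?S. s j ^ lookup \<alpha> j * s j ^ (if i = j then 1 else 0))"
    by (subst sup) (auto simp: keys_add_mon lookup_add power_add intro: prod.cong)
  also have "\<dots> = mon_eval s \<alpha> * (\<Prod>j\<in>?S. s j ^ (if i = j then 1 else 0))"
    using sup[of \<alpha>] by (simp add: prod.distrib subset_insertI)
  also have "(\<Prod>j\<in>?S. s j ^ (if i = j then 1 else 0)) = s i"
    by (subst prod.mono_neutral_left[of ?S "{i}", symmetric]) auto
  finally show ?thesis by (simp add: mult.commute)
qed

lemma peval_single: "h 0 = 0 \<Longrightarrow> peval h s (single \<alpha> c) = h c * mon_eval s \<alpha>"
  by (simp add: peval_def mon_eval_def lookup_single)

lemma peval_add: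
  assumes "h 0 = 0" "\<And>x y. h (x + y) = h x + h y"
  shows "peval h s (u + v) = peval h s u + peval h s v"
  unfolding peval_def by (rule sum_keys_lookup_add) (simp_all add: assms distrib_right)

section \<open>Derivations that shift exponents\<close>

text \<open>With \<open>w \<alpha> = lookup \<alpha> n\<close> and \<open>E = unit_mon n\<close> this is \<open>\<partial>/\<partial>x\<^sub>n\<close>; the truncated
  subtraction \<open>p - E\<close> is harmless because it only matters where the weight \<open>w p\<close> is zero.\<close>
definition shift_deriv ::
    "('k::{comm_monoid_add,minus} \<Rightarrow> nat) \<Rightarrow> 'k \<Rightarrow> ('k \<Rightarrow>\<^sub>0 'v::comm_semiring_1) \<Rightarrow> 'k \<Rightarrow>\<^sub>0 'v" where
  "shift_deriv w E u = (\<Sum>p\<in>keys u. single (p - E) (of_nat (w p) * lookup u p))"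

lemma shift_deriv_single [simp]: "shift_deriv w E (single p c) = single (p - E) (of_nat (w p) * c)"
  unfolding shift_deriv_def by (subst sum_keys_lookup_single) auto

lemma shift_deriv_zero [simp]: "shift_deriv w E 0 = 0"
  by (simp add: shift_deriv_def)

lemma shift_deriv_add: "shift_deriv w E (u + v) = shift_deriv w E u + shift_deriv w E v"
  unfolding shift_deriv_def by (rule sum_keys_lookup_add) (simp_all add: distrib_left single_add)

lemma shift_deriv_sum: "shift_deriv w E (sum f S) = (\<Sum>x\<in>S. shift_deriv w E (f x))"
  by (rule additive_map_sum) (simp_all add: shift_deriv_add)

lemma shift_deriv_one: "w 0 = 0 \<Longrightarrow> shift_deriv w E 1 = 0"
  using shift_deriv_single[of w E 0 1] by simp

definition shift_compatible :: "('k::{comm_monoid_add,minus} \<Rightarrow> nat) \<Rightarrow> 'k \<Rightarrow> bool" where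
  "shift_compatible w E \<longleftrightarrow>
     (\<forall>K p. w (K + p) = w K + w p) \<and> (\<forall>K p. 0 < w p \<longrightarrow> K + p - E = K + (p - E))"

lemma shift_compatible_lookup: "shift_compatible (\<lambda>\<alpha>. lookup \<alpha> n) (unit_mon n)"
  by (simp add: shift_compatible_def lookup_add add_diff_unit_mon_right)

lemma shift_compatible_fst:
  "shift_compatible w E \<Longrightarrow> shift_compatible (\<lambda>p. w (fst p)) (E, 0::'l::cancel_comm_monoid_add)"
  by (simp add: shift_compatible_def prod_eq_iff)

lemma shift_compatible_snd:
  "shift_compatible w E \<Longrightarrow> shift_compatible (\<lambda>p. w (snd p)) (0::'l::cancel_comm_monoid_add, E)"
  by (simp add: shift_compatible_def prod_eq_iff)

lemma shift_deriv_mult_single: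
  fixes u :: "'k::{comm_monoid_add,minus} \<Rightarrow>\<^sub>0 'v::comm_semiring_1"
  assumes "shift_compatible w E"
  shows "shift_deriv w E (single K 1 * u)
    = single (K - E) (of_nat (w K)) * u + single K 1 * shift_deriv w E u"
proof -
  have w: "w (K + p) = w K + w p"
    and right: "0 < w p \<Longrightarrow> K + p - E = K + (p - E)" for p
    using assms unfolding shift_compatible_def by blast+
  have left: "K + p - E = (K - E) + p" if "0 < w K" for p
  proof -
    have "p + K - E = p + (K - E)"
      using assms that unfolding shift_compatible_def by blast
    then show ?thesis by (simp add: add.commute)
  qed
  have on_single: "shift_deriv w E (single K 1 * single p c)
      = single (K - E) (of_nat (w K)) * single p c + single K 1 * shift_deriv w E (single p c)" for p and c :: 'v
  proof (cases "0 < w K \<and> 0 < w p")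
    case True
    then have "K + p - E = (K - E) + p" "K + p - E = K + (p - E)" using left right by auto
    then show ?thesis using True by (simp add: mult_single w single_add[symmetric] distrib_right)
  next
    case False
    then show ?thesis by (cases "w K = 0"; cases "w p = 0") (simp_all add: mult_single w left right)
  qed
  show ?thesis
    by (rule additive_maps_eqI[where L = "\<lambda>u. shift_deriv w E (single K 1 * u)"
          and M = "\<lambda>u. single (K - E) (of_nat (w K)) * u + single K 1 * shift_deriv w E u"])
      (simp_all add: on_single shift_deriv_add distrib_left add_ac)
qed

lemma derivation_mon_eval:
  fixes P :: "'r::comm_semiring_1 \<Rightarrow> 'r"
  assumes one: "P 1 = 0"
    and leibniz: "\<And>i u. P (Y i * u) = (if i = n then u else 0) + Y i * P u"
  shows "P (mon_eval Y \<alpha>) = of_nat (lookup \<alpha> n) * mon_eval Y (\<alpha> - unit_mon n)"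
proof (induction \<alpha> rule: mon_induct)
  case zero
  then show ?case by (simp add: one)
next
  case (add_unit \<alpha> i)
  have step: "P (mon_eval Y (\<alpha> + unit_mon i))
      = (if i = n then mon_eval Y \<alpha> else 0) + of_nat (lookup \<alpha> n) * (Y i * mon_eval Y (\<alpha> - unit_mon n))"
    by (simp add: mon_eval_add_unit_mon leibniz add_unit mult.left_commute)
  show ?case
  proof (cases "i = n")
    case True
    moreover have "of_nat (lookup \<alpha> n) * (Y n * mon_eval Y (\<alpha> - unit_mon n))
        = of_nat (lookup \<alpha> n) * mon_eval Y \<alpha>"
      using mon_eval_add_unit_mon[of Y "\<alpha> - unit_mon n" n] diff_unit_mon_add[of \<alpha> n]
      by (cases "lookup \<alpha> n = 0") auto
    ultimately show ?thesis
      using step by (simp add: add_unit_mon_diff lookup_add algebra_simps)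
  next
    case False
    then show ?thesis
      using step by (simp add: add_unit_mon_diff lookup_add mon_eval_add_unit_mon)
  qed
qed

section \<open>Iterated coproducts of monomials\<close>

definition coprod_var :: "nat \<Rightarrow> V0V0" where
  "coprod_var i = single (unit_mon i, 0) 1 + single (0, unit_mon i) 1"

definition coprod2_var :: "nat \<Rightarrow> V0V0V0" where
  "coprod2_var i = single (unit_mon i, 0, 0) 1 + single (0, unit_mon i, 0) 1 + single (0, 0, unit_mon i) 1"

lemma mono_add: "mono (\<alpha> + \<beta>) = mono \<alpha> * mono \<beta>"
  by (simp add: mono_def mult_single)

lemma mono_zero: "mono 0 = 1"
  by (simp add: mono_def)

lemma var_eq_mono: "var i = mono (unit_mon i)"
  by (simp add: var_def mono_def)

lemma counit_mono: "counit (mono \<alpha>) = (if \<alpha> = 0 then 1 else 0)"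
proof (cases "\<alpha> = 0")
  case False
  then obtain i where "i \<in> keys \<alpha>" by (metis keys_eq_empty ex_in_conv)
  then have "(\<Prod>j\<in>keys \<alpha>. (0::complex) ^ lookup \<alpha> j) = 0"
    by (intro prod_zero) (auto simp: in_keys_iff)
  with False show ?thesis by (simp add: counit_def mono_def peval_single mon_eval_def)
qed (simp add: counit_def mono_def peval_def)

lemma counit_var: "counit (var i) = 0"
  by (simp add: var_eq_mono counit_mono)

lemma Delta_single: "Delta (single \<alpha> c) = single 0 c * mon_eval coprod_var \<alpha>"
  unfolding Delta_def coprod_var_def by (subst peval_single) auto

lemma Delta_mono: "Delta (mono \<alpha>) = mon_eval coprod_var \<alpha>"
  by (simp add: mono_def Delta_single)

lemma Delta_var: "Delta (var i) = coprod_var i"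
  using mon_eval_add_unit_mon[of coprod_var 0 i] by (simp add: var_eq_mono Delta_mono)

lemma Delta2_single: "Delta2 (single \<alpha> c) = single 0 c * mon_eval coprod2_var \<alpha>"
  unfolding Delta2_def coprod2_var_def by (subst peval_single) auto

lemma Delta2_add: "Delta2 (u + v) = Delta2 u + Delta2 v"
  unfolding Delta2_def by (rule peval_add) (auto simp: single_add)

lemma Delta2_mono: "Delta2 (mono \<alpha>) = mon_eval coprod2_var \<alpha>"
  by (simp add: mono_def Delta2_single)

abbreviation partial_fst ::
    "nat \<Rightarrow> ((mon \<times> 'l::cancel_comm_monoid_add) \<Rightarrow>\<^sub>0 complex) \<Rightarrow> (mon \<times> 'l) \<Rightarrow>\<^sub>0 complex" where
  "partial_fst n \<equiv> shift_deriv (\<lambda>p. lookup (fst p) n) (unit_mon n, 0)"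

abbreviation partial_snd :: "nat \<Rightarrow> V0V0V0 \<Rightarrow> V0V0V0" where
  "partial_snd n \<equiv> shift_deriv (\<lambda>p. lookup (fst (snd p)) n) (0, unit_mon n, 0)"

lemma partial_fst_Delta_mono:
  "partial_fst n (Delta (mono \<alpha>)) = of_nat (lookup \<alpha> n) * Delta (mono (\<alpha> - unit_mon n))"
  unfolding Delta_mono
proof (rule derivation_mon_eval)
  show "partial_fst n (coprod_var i * u) = (if i = n then u else 0) + coprod_var i * partial_fst n u" for i u
    unfolding coprod_var_def distrib_right shift_deriv_add
      shift_deriv_mult_single[OF shift_compatible_fst[OF shift_compatible_lookup]]
    by (simp add: algebra_simps flip: zero_prod_def)
qed (simp add: shift_deriv_one)

lemma partial_fst_Delta2_mono:
  "partial_fst n (Delta2 (mono \<alpha>)) = of_nat (lookup \<alpha> n) * Delta2 (mono (\<alpha> - unit_mon n))"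
  unfolding Delta2_mono
proof (rule derivation_mon_eval)
  show "partial_fst n (coprod2_var i * u) = (if i = n then u else 0) + coprod2_var i * partial_fst n u" for i u
    unfolding coprod2_var_def distrib_right shift_deriv_add
      shift_deriv_mult_single[OF shift_compatible_fst[OF shift_compatible_lookup]]
    by (simp add: algebra_simps flip: zero_prod_def)
qed (simp add: shift_deriv_one)

lemma partial_snd_Delta2_mono:
  "partial_snd n (Delta2 (mono \<alpha>)) = of_nat (lookup \<alpha> n) * Delta2 (mono (\<alpha> - unit_mon n))"
  unfolding Delta2_mono
proof (rule derivation_mon_eval)
  show "partial_snd n (coprod2_var i * u) = (if i = n then u else 0) + coprod2_var i * partial_snd n u" for i u
    unfolding coprod2_var_def distrib_right shift_deriv_add
      shift_deriv_mult_single[OF shift_compatible_snd[OF shift_compatible_fst[OF shift_compatible_lookup]]]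
    by (simp add: algebra_simps flip: zero_prod_def)
qed (simp add: shift_deriv_one)

lemma keys_coprod_var: "keys (coprod_var i) \<subseteq> {(unit_mon i, 0), (0, unit_mon i)}"
  unfolding coprod_var_def
  using keys_add[of "single (unit_mon i, 0) (1::complex)" "single (0, unit_mon i) 1"] by auto

lemma keys_coprod2_var:
  "keys (coprod2_var i) \<subseteq> {(unit_mon i, 0, 0), (0, unit_mon i, 0), (0, 0, unit_mon i)}"
  unfolding coprod2_var_def
  using keys_add[of "single (unit_mon i, 0, 0) (1::complex) + single (0, unit_mon i, 0) 1"
      "single (0, 0, unit_mon i) 1"]
    keys_add[of "single (unit_mon i, 0, 0) (1::complex)" "single (0, unit_mon i, 0) 1"] by auto

lemma keys_Delta_mono: "p \<in> keys (Delta (mono \<beta>)) \<Longrightarrow> keys (fst p) \<subseteq> keys \<beta>"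
proof (induction \<beta> arbitrary: p rule: mon_induct)
  case (add_unit \<alpha> i)
  then obtain x y where xy: "x \<in> keys (coprod_var i)" "y \<in> keys (Delta (mono \<alpha>))" "p = x + y"
    using keys_mult unfolding Delta_mono mon_eval_add_unit_mon by blast
  then have "x = (unit_mon i, 0) \<or> x = (0, unit_mon i)"
    using keys_coprod_var by blast
  then show ?case
    using add_unit.IH[OF xy(2)] xy(3) by (auto simp: keys_add_mon)
qed (simp add: Delta_mono)

lemma keys_Delta2_mono:
  "p \<in> keys (Delta2 (mono \<beta>)) \<Longrightarrow> keys (fst p) \<union> keys (fst (snd p)) \<subseteq> keys \<beta>"
proof (induction \<beta> arbitrary: p rule: mon_induct)
  case (add_unit \<alpha> i)
  then obtain x y where xy: "x \<in> keys (coprod2_var i)" "y \<in> keys (Delta2 (mono \<alpha>))" "p = x + y"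
    using keys_mult unfolding Delta2_mono mon_eval_add_unit_mon by blast
  then have "x = (unit_mon i, 0, 0) \<or> x = (0, unit_mon i, 0) \<or> x = (0, 0, unit_mon i)"
    using keys_coprod2_var by blast
  then show ?case
    using add_unit.IH[OF xy(2)] xy(3) by (auto simp: keys_add_mon)
qed (simp add: Delta2_mono)

section \<open>The operator \<open>Q\<close> and its truncated exponential\<close>

abbreviation partial :: "nat \<Rightarrow> 'a::comm_ring_1 V0A \<Rightarrow> 'a V0A" where
  "partial n \<equiv> shift_deriv (\<lambda>\<alpha>. lookup \<alpha> n) (unit_mon n)"

lemma pderiv_var_eq_partial: "pderiv_var n p = partial n p"
  by (simp add: pderiv_var_def shift_deriv_def)

lemma partial_const_mult: "partial n (single 0 c * p) = single 0 c * partial n p"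
  by (rule additive_maps_eqI[where u = p])
    (simp_all add: shift_deriv_add distrib_left mult_single mult.left_commute)

lemma partial_commute: "partial m (partial n p) = partial n (partial m p)"
proof (rule additive_maps_eqI[where u = p])
  fix \<alpha>
  have "\<alpha> - unit_mon n - unit_mon m = \<alpha> - unit_mon m - unit_mon n"
    by (rule poly_mapping_eqI) (simp add: lookup_minus diff_commute)
  moreover have "of_nat (lookup (\<alpha> - unit_mon n) m) * (of_nat (lookup \<alpha> n) :: 'a)
      = of_nat (lookup (\<alpha> - unit_mon m) n) * of_nat (lookup \<alpha> m)"
    by (cases "m = n") (simp_all add: lookup_minus mult.commute)
  ultimately show "partial m (partial n (single \<alpha> (lookup p \<alpha>))) = partial n (partial m (single \<alpha> (lookup p \<alpha>)))"
    by (simp add: mult.assoc[symmetric])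
qed (simp_all add: shift_deriv_add)

lemma partial_mult_var:
  "partial n (single (unit_mon i) 1 * p) = (if n = i then p else 0) + single (unit_mon i) 1 * partial n p"
  by (simp add: shift_deriv_mult_single[OF shift_compatible_lookup])

definition Q_on :: "(nat \<Rightarrow> nat \<Rightarrow> 'a::comm_ring_1) \<Rightarrow> nat set \<Rightarrow> 'a V0A \<Rightarrow> 'a V0A" where
  "Q_on q V p = (\<Sum>m\<in>V. \<Sum>n\<in>V. single 0 (q m n) * partial m (partial n p))"

definition Q_comm_var :: "(nat \<Rightarrow> nat \<Rightarrow> 'a::comm_ring_1) \<Rightarrow> nat set \<Rightarrow> nat \<Rightarrow> 'a V0A \<Rightarrow> 'a V0A" where
  "Q_comm_var q V i p = (\<Sum>n\<in>V. single 0 (q i n + q n i) * partial n p)"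

lemma Q_on_add: "Q_on q V (a + b) = Q_on q V a + Q_on q V b"
  by (simp add: Q_on_def shift_deriv_add distrib_left sum.distrib)

lemma Q_on_zero [simp]: "Q_on q V 0 = 0"
  by (simp add: Q_on_def)

lemma Q_on_const_mult: "Q_on q V (single 0 c * p) = single 0 c * Q_on q V p"
  by (simp add: Q_on_def partial_const_mult sum_distrib_left mult.left_commute)

lemma Q_on_sum: "Q_on q V (sum f S) = (\<Sum>x\<in>S. Q_on q V (f x))"
  by (rule additive_map_sum) (simp_all add: Q_on_add)

lemma Q_on_of_nat_mult: "Q_on q V (of_nat k * p) = of_nat k * Q_on q V p"
  by (rule additive_map_of_nat_mult) (simp_all add: Q_on_add)

lemma Q_comm_var_add: "Q_comm_var q V i (a + b) = Q_comm_var q V i a + Q_comm_var q V i b"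
  by (simp add: Q_comm_var_def shift_deriv_add distrib_left sum.distrib)

lemma Q_comm_var_const_mult: "Q_comm_var q V i (single 0 c * p) = single 0 c * Q_comm_var q V i p"
  by (simp add: Q_comm_var_def partial_const_mult sum_distrib_left mult.left_commute)

lemma Q_comm_var_zero [simp]: "Q_comm_var q V i 0 = 0"
  by (simp add: Q_comm_var_def)

lemma Q_comm_var_sum: "Q_comm_var q V i (sum f S) = (\<Sum>x\<in>S. Q_comm_var q V i (f x))"
  by (rule additive_map_sum) (simp_all add: Q_comm_var_add)

lemma Q_on_Q_comm_var: "Q_on q V (Q_comm_var q V i p) = Q_comm_var q V i (Q_on q V p)"
proof -
  have "partial n (Q_on q V p) = Q_on q V (partial n p)" for n
    by (simp add: Q_on_def shift_deriv_sum partial_const_mult partial_commute[of n])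
  then show ?thesis
    by (simp add: Q_comm_var_def Q_on_sum Q_on_const_mult)
qed

lemma Q_on_mult_var:
  assumes "finite V" "i \<in> V"
  shows "Q_on q V (single (unit_mon i) 1 * p) = single (unit_mon i) 1 * Q_on q V p + Q_comm_var q V i p"
proof -
  have if_const: "(\<Sum>n\<in>V. if b then f n else 0) = (if b then \<Sum>n\<in>V. f n else 0)"
    for b and f :: "nat \<Rightarrow> 'a V0A"
    by simp
  have "single 0 (q m n) * partial m (partial n (single (unit_mon i) 1 * p))
      = (if n = i then single 0 (q m n) * partial m p else 0)
        + (if m = i then single 0 (q m n) * partial n p else 0)
        + single (unit_mon i) 1 * (single 0 (q m n) * partial m (partial n p))" for m n
    by (simp add: partial_mult_var shift_deriv_add distrib_left mult.left_commute)
  then have "Q_on q V (single (unit_mon i) 1 * p)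
      = (\<Sum>m\<in>V. single 0 (q m i) * partial m p) + (\<Sum>n\<in>V. single 0 (q i n) * partial n p)
        + single (unit_mon i) 1 * Q_on q V p"
    using assms by (simp add: Q_on_def sum.distrib sum_distrib_left if_const)
  then show ?thesis
    by (simp add: Q_comm_var_def sum.distrib single_add distrib_right)
qed

lemma Q_on_pow_add: "(Q_on q V ^^ k) (a + b) = (Q_on q V ^^ k) a + (Q_on q V ^^ k) b"
  by (induction k) (simp_all add: Q_on_add)

lemma Q_on_pow_zero [simp]: "(Q_on q V ^^ k) 0 = 0"
  by (induction k) simp_all

lemma Q_on_pow_const_mult: "(Q_on q V ^^ k) (single 0 c * p) = single 0 c * (Q_on q V ^^ k) p"
  by (induction k) (simp_all add: Q_on_const_mult)

lemma Q_on_pow_mult_var: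
  assumes "finite V" "i \<in> V"
  shows "(Q_on q V ^^ Suc k) (single (unit_mon i) 1 * p)
    = single (unit_mon i) 1 * (Q_on q V ^^ Suc k) p + of_nat (Suc k) * Q_comm_var q V i ((Q_on q V ^^ k) p)"
proof (induction k)
  case 0
  then show ?case by (simp add: Q_on_mult_var[OF assms])
next
  case (Suc k)
  have "(Q_on q V ^^ Suc (Suc k)) (single (unit_mon i) 1 * p)
      = Q_on q V (single (unit_mon i) 1 * (Q_on q V ^^ Suc k) p)
        + of_nat (Suc k) * Q_on q V (Q_comm_var q V i ((Q_on q V ^^ k) p))"
    by (subst funpow.simps(2)) (simp only: o_apply Suc Q_on_add Q_on_of_nat_mult)
  then show ?case
    by (simp add: Q_on_mult_var[OF assms] Q_on_Q_comm_var algebra_simps)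
qed

definition deg_le :: "nat \<Rightarrow> 'a::zero V0A \<Rightarrow> bool" where
  "deg_le d p \<longleftrightarrow> (\<forall>\<alpha>\<in>keys p. mon_deg \<alpha> \<le> d)"

lemma deg_le_single: "deg_le (mon_deg \<alpha>) (single \<alpha> c)"
  by (simp add: deg_le_def)

lemma tdeg_le_iff_deg_le: "tdeg p \<le> d \<longleftrightarrow> deg_le d p"
  unfolding deg_le_def tdeg_def mon_deg_def by auto

lemma keys_partial:
  "\<alpha> \<in> keys (partial n p) \<Longrightarrow> \<exists>\<beta>\<in>keys p. 0 < lookup \<beta> n \<and> \<alpha> = \<beta> - unit_mon n"
proof -
  assume "\<alpha> \<in> keys (partial n p)"
  then obtain \<beta> where \<beta>: "\<beta> \<in> keys p"
    "\<alpha> \<in> keys (single (\<beta> - unit_mon n) (of_nat (lookup \<beta> n) * lookup p \<beta>))"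
    unfolding shift_deriv_def
    using keys_sum[of "\<lambda>\<beta>. single (\<beta> - unit_mon n) (of_nat (lookup \<beta> n) * lookup p \<beta>)"] by blast
  then have "of_nat (lookup \<beta> n) * lookup p \<beta> \<noteq> 0" "\<alpha> = \<beta> - unit_mon n"
    by (auto split: if_splits)
  then have "lookup \<beta> n \<noteq> 0" by (metis mult_zero_left of_nat_0)
  with \<beta>(1) \<open>\<alpha> = \<beta> - unit_mon n\<close> show ?thesis by auto
qed

lemma deg_le_partial: "deg_le d p \<Longrightarrow> deg_le (d - 1) (partial n p)"
  unfolding deg_le_def using keys_partial mon_deg_diff_unit_mon by fastforce

lemma partial_eq_zero_if_deg_le_0:
  assumes "deg_le 0 p"
  shows "partial n p = 0"
proof -
  have "keys (partial n p) = {}"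
  proof (rule equals0I)
    fix \<alpha> assume "\<alpha> \<in> keys (partial n p)"
    then obtain \<beta> where "\<beta> \<in> keys p" "0 < lookup \<beta> n"
      using keys_partial by blast
    with assms lookup_le_mon_deg[of \<beta> n] show False
      unfolding deg_le_def by force
  qed
  then show ?thesis by simp
qed

lemma deg_le_const_mult: "deg_le d p \<Longrightarrow> deg_le d (single 0 c * (p::'a::comm_semiring_1 V0A))"
  unfolding deg_le_def using keys_mult[of "single 0 c" p] by (force split: if_splits)

lemma deg_le_sum: "(\<And>x. x \<in> S \<Longrightarrow> deg_le d (f x)) \<Longrightarrow> deg_le d (sum f S)"
  unfolding deg_le_def using keys_sum[of f S] by blast

lemma deg_le_Q_on: "deg_le d p \<Longrightarrow> deg_le (d - 2) (Q_on q V p)"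
  unfolding Q_on_def using deg_le_partial[OF deg_le_partial]
  by (auto intro!: deg_le_sum deg_le_const_mult simp: numeral_2_eq_2)

lemma Q_on_pow_vanish: "deg_le d p \<Longrightarrow> d < k \<Longrightarrow> (Q_on q V ^^ k) p = 0"
proof (induction k arbitrary: d p)
  case (Suc k)
  show ?case
  proof (cases "d = 0")
    case True
    with Suc.prems have "Q_on q V p = 0"
      by (simp add: Q_on_def partial_eq_zero_if_deg_le_0)
    then show ?thesis by (simp add: funpow_Suc_right del: funpow.simps)
  next
    case False
    have "d - 2 < k" using Suc.prems(2) False by linarith
    then have "(Q_on q V ^^ k) (Q_on q V p) = 0"
      by (rule Suc.IH[OF deg_le_Q_on[OF Suc.prems(1)]])
    then show ?thesis by (simp add: funpow_Suc_right del: funpow.simps)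
  qed
qed simp

lemma vars_partial: "vars (partial n p) \<subseteq> vars p"
  unfolding vars_def using keys_partial keys_diff_unit_mon by fastforce

lemma partial_eq_zero_if_notin_vars: "n \<notin> vars p \<Longrightarrow> partial n p = 0"
  unfolding shift_deriv_def vars_def by (intro sum.neutral) (auto simp: in_keys_iff)

lemma vars_const_mult: "vars (single 0 c * (p::'a::comm_semiring_1 V0A)) \<subseteq> vars p"
  unfolding vars_def using keys_mult[of "single 0 c" p] by (force split: if_splits)

lemma vars_sum: "vars (sum f S) \<subseteq> (\<Union>x\<in>S. vars (f x))"
  unfolding vars_def using keys_sum[of f S] by blast

lemma vars_Q_on:
  assumes "vars p \<subseteq> V"
  shows "vars (Q_on q V p) \<subseteq> V"
proof -
  have "vars (single 0 (q m n) * partial m (partial n p)) \<subseteq> V" for m n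
    using assms vars_const_mult vars_partial by blast
  then have "vars (\<Sum>n\<in>V. single 0 (q m n) * partial m (partial n p)) \<subseteq> V" for m
    using vars_sum by blast
  then show ?thesis
    unfolding Q_on_def using vars_sum by blast
qed

lemma Qop_eq_Q_on:
  assumes "finite V" "vars p \<subseteq> V"
  shows "Qop q p = Q_on q V p"
proof -
  have "\<forall>m\<in>V - vars p. \<forall>n\<in>V. partial m (partial n p) = 0"
    using vars_partial partial_eq_zero_if_notin_vars by blast
  moreover have "\<forall>n\<in>V - vars p. partial n p = 0"
    using partial_eq_zero_if_notin_vars by blast
  ultimately show ?thesis
    unfolding Qop_def Q_on_def pderiv_var_eq_partial using assms
    by (intro sum.mono_neutral_cong_left) (auto intro!: sum.mono_neutral_cong_left)
qed

lemma Qop_pow_eq_Q_on_pow: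
  "finite V \<Longrightarrow> vars p \<subseteq> V \<Longrightarrow> (Qop q ^^ k) p = (Q_on q V ^^ k) p \<and> vars ((Q_on q V ^^ k) p) \<subseteq> V"
  by (induction k) (auto simp: Qop_eq_Q_on vars_Q_on)

lemma Q_comm_var_single:
  "Q_comm_var q V i (single \<beta> 1)
    = (\<Sum>n\<in>V. single 0 (q i n + q n i) * (of_nat (lookup \<beta> n) * single (\<beta> - unit_mon n) 1))"
  by (simp add: Q_comm_var_def mult_single flip: single_of_nat)

locale calg =
  fixes emb :: "complex \<Rightarrow> 'a::comm_ring_1"
  assumes calg_hom: "calg_hom emb"
begin

lemma emb_add: "emb (x + y) = emb x + emb y"
  using calg_hom by (simp add: calg_hom_def)

lemma emb_mult: "emb (x * y) = emb x * emb y"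
  using calg_hom by (simp add: calg_hom_def)

lemma emb_1 [simp]: "emb 1 = 1"
  using calg_hom by (simp add: calg_hom_def)

lemma emb_0 [simp]: "emb 0 = 0"
  using emb_add[of 0 0] by simp

lemma emb_of_nat [simp]: "emb (of_nat k) = of_nat k"
  by (induction k) (simp_all add: emb_add)

definition expQ_on :: "(nat \<Rightarrow> nat \<Rightarrow> 'a) \<Rightarrow> nat set \<Rightarrow> nat \<Rightarrow> 'a V0A \<Rightarrow> 'a V0A" where
  "expQ_on q V N p = (\<Sum>k\<le>N. single 0 (emb (1 / of_nat (fact k))) * (Q_on q V ^^ k) p)"

lemma expQ_on_add: "expQ_on q V N (a + b) = expQ_on q V N a + expQ_on q V N b"
  by (simp add: expQ_on_def Q_on_pow_add distrib_left sum.distrib)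

lemma expQ_on_const_mult: "expQ_on q V N (single 0 c * p) = single 0 c * expQ_on q V N p"
  by (simp add: expQ_on_def Q_on_pow_const_mult sum_distrib_left mult.left_commute)

lemma expQ_on_zero [simp]: "expQ_on q V N 0 = 0"
  by (simp add: expQ_on_def)

lemma expQ_on_of_nat_mult: "expQ_on q V N (of_nat k * p) = of_nat k * expQ_on q V N p"
  by (rule additive_map_of_nat_mult) (simp_all add: expQ_on_add)

lemma expQ_on_sum: "expQ_on q V N (sum f S) = (\<Sum>x\<in>S. expQ_on q V N (f x))"
  by (rule additive_map_sum) (simp_all add: expQ_on_add)

lemma Q_comm_var_expQ_on: "Q_comm_var q V i (expQ_on q V N p) = expQ_on q V N (Q_comm_var q V i p)"
proof -
  have "Q_comm_var q V i ((Q_on q V ^^ k) p) = (Q_on q V ^^ k) (Q_comm_var q V i p)" for k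
    by (induction k) (simp_all add: Q_on_Q_comm_var[symmetric])
  then show ?thesis
    by (simp add: expQ_on_def Q_comm_var_sum Q_comm_var_const_mult)
qed

lemma inv_fact_Suc_mult: "emb (1 / of_nat (fact (Suc k))) * of_nat (Suc k) = emb (1 / of_nat (fact k))"
proof -
  have "(of_nat (fact k) :: complex) \<noteq> 0" "(of_nat (Suc k) :: complex) \<noteq> 0"
    by (simp, metis of_nat_eq_0_iff nat.distinct(1))
  then have "1 / of_nat (fact (Suc k)) * of_nat (Suc k) = (1 / of_nat (fact k) :: complex)"
    by (simp only: fact_Suc of_nat_mult divide_simps) simp
  then show ?thesis
    by (metis emb_mult emb_of_nat)
qed

lemma expQ_on_mult_var:
  assumes "finite V" "i \<in> V"
  shows "expQ_on q V (Suc N) (single (unit_mon i) 1 * p)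
    = single (unit_mon i) 1 * expQ_on q V (Suc N) p + Q_comm_var q V i (expQ_on q V N p)"
proof -
  let ?c = "\<lambda>k. single 0 (emb (1 / of_nat (fact k))) :: 'a V0A"
  have shift: "?c (Suc k) * of_nat (Suc k) = ?c k" for k
    by (simp only: single_of_nat[symmetric] mult_single add_0 inv_fact_Suc_mult)
  have "expQ_on q V (Suc N) (single (unit_mon i) 1 * p)
      = ?c 0 * (single (unit_mon i) 1 * p)
        + (\<Sum>k\<le>N. ?c (Suc k) * (Q_on q V ^^ Suc k) (single (unit_mon i) 1 * p))"
    unfolding expQ_on_def by (subst sum.atMost_Suc_shift) simp
  also have "\<dots> = single (unit_mon i) 1 * (?c 0 * p + (\<Sum>k\<le>N. ?c (Suc k) * (Q_on q V ^^ Suc k) p))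
      + (\<Sum>k\<le>N. ?c k * Q_comm_var q V i ((Q_on q V ^^ k) p))"
    by (simp only: Q_on_pow_mult_var[OF assms] distrib_left mult.assoc[symmetric] shift sum.distrib)
      (simp add: sum_distrib_left ac_simps)
  also have "?c 0 * p + (\<Sum>k\<le>N. ?c (Suc k) * (Q_on q V ^^ Suc k) p) = expQ_on q V (Suc N) p"
    unfolding expQ_on_def by (subst sum.atMost_Suc_shift) simp
  also have "(\<Sum>k\<le>N. ?c k * Q_comm_var q V i ((Q_on q V ^^ k) p)) = Q_comm_var q V i (expQ_on q V N p)"
    by (simp add: expQ_on_def Q_comm_var_sum Q_comm_var_const_mult)
  finally show ?thesis .
qed

lemma expQ_on_single_add_unit_mon:
  assumes "finite V" "i \<in> V"
  shows "expQ_on q V (Suc M) (single (\<beta> + unit_mon i) 1)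
    = single (unit_mon i) 1 * expQ_on q V (Suc M) (single \<beta> 1)
      + (\<Sum>n\<in>V. single 0 (q i n + q n i) * (of_nat (lookup \<beta> n) * expQ_on q V M (single (\<beta> - unit_mon n) 1)))"
proof -
  have "single (\<beta> + unit_mon i) 1 = single (unit_mon i) 1 * (single \<beta> 1 :: 'a V0A)"
    by (simp add: mult_single add.commute)
  then show ?thesis
    by (simp add: expQ_on_mult_var[OF assms] Q_comm_var_expQ_on Q_comm_var_single expQ_on_sum
        expQ_on_const_mult expQ_on_of_nat_mult)
qed

lemma expQ_on_truncate:
  assumes "deg_le d p" "d \<le> N"
  shows "expQ_on q V N p = expQ_on q V d p"
  unfolding expQ_on_def
  by (rule sum.mono_neutral_right) (use assms Q_on_pow_vanish[OF assms(1)] in auto)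

lemma expQ_eq_expQ_on:
  assumes "finite V" "vars p \<subseteq> V" "deg_le N p"
  shows "expQ emb q p = expQ_on q V N p"
proof -
  have "expQ emb q p = expQ_on q V (tdeg p) p"
    unfolding expQ_def expQ_on_def using Qop_pow_eq_Q_on_pow[OF assms(1,2)] by simp
  also have "\<dots> = expQ_on q V N p"
    using expQ_on_truncate[of "tdeg p" p N] assms(3) by (simp add: tdeg_le_iff_deg_le[symmetric])
  finally show ?thesis .
qed

end

section \<open>Bicharacters\<close>

lemma sweedler2_add:
  "h 0 = 0 \<Longrightarrow> (\<And>x y. h (x + y) = h x + h y) \<Longrightarrow>
   sweedler2 h \<Phi> (u + v) = sweedler2 h \<Phi> u + sweedler2 h \<Phi> v"
  unfolding sweedler2_def by (rule sum_keys_lookup_add) (simp_all add: distrib_right)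

lemma sweedler2_single: "h 0 = 0 \<Longrightarrow> sweedler2 h \<Phi> (single p c) = h c * \<Phi> (mono (fst p)) (mono (snd p))"
  unfolding sweedler2_def by (subst sum_keys_lookup_single) simp_all

locale bicharacter = calg emb for emb :: "complex \<Rightarrow> 'a::comm_ring_1" +
  fixes r :: "V0V0 \<Rightarrow> 'a"
  assumes bichar: "bichar emb r"
begin

lemma r_tens_one_left: "r (tens 1 a) = emb (counit a)"
  using bichar by (simp add: bichar_def)

lemma r_tens_one_right: "r (tens a 1) = emb (counit a)"
  using bichar by (simp add: bichar_def)

lemma r_tens_mult_left: "r (tens (a * b) c) = sweedler2 emb (\<lambda>c' c''. r (tens a c') * r (tens b c'')) (Delta c)"
  using bichar by (simp add: bichar_def)

lemma r_tens_mult_right: "r (tens a (b * c)) = sweedler2 emb (\<lambda>a' a''. r (tens a' b) * r (tens a'' c)) (Delta a)"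
  using bichar by (simp add: bichar_def)

definition q :: "nat \<Rightarrow> nat \<Rightarrow> 'a" where
  "q m n = r (tens (var m) (var n))"

definition r_mon :: "mon \<Rightarrow> mon \<Rightarrow> 'a" where
  "r_mon \<alpha> \<beta> = r (tens (mono \<alpha>) (mono \<beta>))"

lemma sweedler2_coprod_var:
  "sweedler2 emb \<Phi> (coprod_var i) = \<Phi> (var i) 1 + \<Phi> 1 (var i)"
  by (simp add: coprod_var_def sweedler2_add sweedler2_single emb_add var_eq_mono mono_zero)

text \<open>\<open>r(x\<^sub>i \<otimes> -)\<close> and \<open>r(- \<otimes> x\<^sub>i)\<close> vanish on all monomials except the variables: a product
  \<open>x\<^sub>m x\<^sup>\<nu>\<close> with \<open>\<nu> \<noteq> 0\<close> splits, by the bicharacter property, into terms each containing a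
  factor \<open>r(1 \<otimes> -)\<close> or \<open>r(- \<otimes> 1)\<close>, i.e. a counit of a nonconstant monomial.\<close>
lemma r_var_mono:
  assumes "finite V" "keys \<mu> \<subseteq> V"
  shows "r (tens (var i) (mono \<mu>)) = (\<Sum>n\<in>V. if \<mu> = unit_mon n then q i n else 0)"
proof (cases \<mu> rule: mon_cases)
  case 1
  then show ?thesis by (simp add: mono_zero r_tens_one_right var_eq_mono counit_mono)
next
  case (2 m)
  then show ?thesis using assms by (simp add: q_def var_eq_mono)
next
  case (3 m \<nu>)
  then have "r (tens (var i) (mono \<mu>)) = r (tens (var i) (var m * mono \<nu>))"
    by (simp add: mono_add var_eq_mono)
  also have "\<dots> = 0"
    unfolding r_tens_mult_right Delta_var sweedler2_coprod_var
    using 3 by (simp add: r_tens_one_left counit_mono counit_var unit_mon_add_eq_unit_mon_iff)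
  finally show ?thesis using 3 by (simp add: unit_mon_add_eq_unit_mon_iff)
qed

lemma r_mono_var:
  assumes "finite V" "keys \<mu> \<subseteq> V"
  shows "r (tens (mono \<mu>) (var i)) = (\<Sum>m\<in>V. if \<mu> = unit_mon m then q m i else 0)"
proof (cases \<mu> rule: mon_cases)
  case 1
  then show ?thesis by (simp add: mono_zero r_tens_one_left var_eq_mono counit_mono)
next
  case (2 m)
  then show ?thesis using assms by (simp add: q_def var_eq_mono)
next
  case (3 m \<nu>)
  then have "r (tens (mono \<mu>) (var i)) = r (tens (var m * mono \<nu>) (var i))"
    by (simp add: mono_add var_eq_mono)
  also have "\<dots> = 0"
    unfolding r_tens_mult_left Delta_var sweedler2_coprod_var
    using 3 by (simp add: r_tens_one_right counit_mono counit_var unit_mon_add_eq_unit_mon_iff)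
  finally show ?thesis using 3 by (simp add: unit_mon_add_eq_unit_mon_iff)
qed

definition slice_left :: "mon \<Rightarrow> (mon \<Rightarrow> 'a) \<Rightarrow> V0V0 \<Rightarrow> 'a" where
  "slice_left \<mu> g u = (\<Sum>p\<in>keys u. emb (lookup u p) * (if fst p = \<mu> then g (snd p) else 0))"

lemma slice_left_add: "slice_left \<mu> g (u + v) = slice_left \<mu> g u + slice_left \<mu> g v"
  unfolding slice_left_def by (rule sum_keys_lookup_add) (simp_all add: emb_add distrib_right)

lemma slice_left_zero [simp]: "slice_left \<mu> g 0 = 0"
  by (simp add: slice_left_def)

lemma slice_left_single [simp]:
  "slice_left \<mu> g (single p c) = emb c * (if fst p = \<mu> then g (snd p) else 0)"
  unfolding slice_left_def by (subst sum_keys_lookup_single) simp_all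

lemma slice_left_of_nat_mult: "slice_left \<mu> g (of_nat k * u) = of_nat k * slice_left \<mu> g u"
  by (rule additive_map_of_nat_mult) (simp_all add: slice_left_add)

lemma slice_left_coprod_var_mult:
  "slice_left 0 g (coprod_var j * u) = slice_left 0 (\<lambda>\<nu>. g (unit_mon j + \<nu>)) u"
proof (rule additive_maps_eqI[where u = u and L = "\<lambda>u. slice_left 0 g (coprod_var j * u)"
      and M = "slice_left 0 (\<lambda>\<nu>. g (unit_mon j + \<nu>))"])
  fix p :: "mon \<times> mon"
  show "slice_left 0 g (coprod_var j * single p (lookup u p))
      = slice_left 0 (\<lambda>\<nu>. g (unit_mon j + \<nu>)) (single p (lookup u p))"
    by (cases p) (simp add: coprod_var_def distrib_right mult_single slice_left_add)
qed (simp_all add: slice_left_add distrib_left)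

text \<open>This is the counit axiom \<open>(\<eta> \<otimes> id) \<circ> \<Delta> = id\<close>, evaluated through \<open>g\<close>.\<close>
lemma slice_left_zero_Delta_mono: "slice_left 0 g (Delta (mono \<beta>)) = g \<beta>"
proof (induction \<beta> arbitrary: g rule: mon_induct)
  case zero
  show ?case by (simp add: Delta_mono flip: single_one)
next
  case (add_unit \<alpha> i)
  then show ?case
    by (simp add: Delta_mono mon_eval_add_unit_mon slice_left_coprod_var_mult add.commute)
qed

lemma slice_left_unit_mon: "slice_left (unit_mon n) g u = slice_left 0 g (partial_fst n u)"
proof (rule additive_maps_eqI[where u = u and L = "slice_left (unit_mon n) g"
      and M = "\<lambda>u. slice_left 0 g (partial_fst n u)"])
  fix p :: "mon \<times> mon"
  obtain \<mu> \<nu> where p: "p = (\<mu>, \<nu>)" by (cases p)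
  show "slice_left (unit_mon n) g (single p (lookup u p))
      = slice_left 0 g (partial_fst n (single p (lookup u p)))"
    by (cases "lookup \<mu> n = 0") (auto simp: p emb_mult diff_unit_mon_eq_0_iff)
qed (simp_all add: slice_left_add shift_deriv_add)

lemma sweedler2_eq_sum_slice_left:
  assumes "finite V"
    and "\<And>p. p \<in> keys u \<Longrightarrow> \<rho> (mono (fst p)) = (\<Sum>n\<in>V. if fst p = unit_mon n then w n else 0)"
  shows "sweedler2 emb (\<lambda>c' c''. \<rho> c' * G c'') u = (\<Sum>n\<in>V. w n * slice_left (unit_mon n) (\<lambda>\<nu>. G (mono \<nu>)) u)"
proof -
  have "sweedler2 emb (\<lambda>c' c''. \<rho> c' * G c'') u
      = (\<Sum>p\<in>keys u. \<Sum>n\<in>V. w n * (emb (lookup u p) * (if fst p = unit_mon n then G (mono (snd p)) else 0)))"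
    unfolding sweedler2_def using assms(2)
    by (intro sum.cong) (simp_all add: sum_distrib_left sum_distrib_right if_distrib if_distribR ac_simps cong: if_cong)
  also have "\<dots> = (\<Sum>n\<in>V. w n * slice_left (unit_mon n) (\<lambda>\<nu>. G (mono \<nu>)) u)"
    by (subst sum.swap) (simp add: slice_left_def sum_distrib_left)
  finally show ?thesis .
qed

lemma sweedler2_Delta_mono_linear_left:
  assumes "finite V" "keys b \<subseteq> V"
    and "\<And>\<mu>. keys \<mu> \<subseteq> V \<Longrightarrow> \<rho> (mono \<mu>) = (\<Sum>n\<in>V. if \<mu> = unit_mon n then w n else 0)"
  shows "sweedler2 emb (\<lambda>c' c''. \<rho> c' * G c'') (Delta (mono b))
    = (\<Sum>n\<in>V. w n * of_nat (lookup b n) * G (mono (b - unit_mon n)))"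
proof -
  have "\<rho> (mono (fst p)) = (\<Sum>n\<in>V. if fst p = unit_mon n then w n else 0)"
    if "p \<in> keys (Delta (mono b))" for p
    using assms(2,3) keys_Delta_mono[OF that] by blast
  then show ?thesis
    by (simp add: sweedler2_eq_sum_slice_left[OF assms(1)] slice_left_unit_mon partial_fst_Delta_mono
        slice_left_of_nat_mult slice_left_zero_Delta_mono mult.assoc)
qed

lemma r_mon_unit_mon_left:
  assumes "finite V" "keys \<beta> \<subseteq> V"
  shows "r_mon (\<alpha> + unit_mon i) \<beta> = (\<Sum>n\<in>V. q i n * of_nat (lookup \<beta> n) * r_mon \<alpha> (\<beta> - unit_mon n))"
proof -
  have "mono (\<alpha> + unit_mon i) = var i * mono \<alpha>"
    by (simp add: mono_add var_eq_mono mult.commute)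
  then have "r_mon (\<alpha> + unit_mon i) \<beta>
      = sweedler2 emb (\<lambda>c' c''. r (tens (var i) c') * r (tens (mono \<alpha>) c'')) (Delta (mono \<beta>))"
    by (simp add: r_mon_def r_tens_mult_left)
  also have "\<dots> = (\<Sum>n\<in>V. q i n * of_nat (lookup \<beta> n) * r_mon \<alpha> (\<beta> - unit_mon n))"
    unfolding r_mon_def by (rule sweedler2_Delta_mono_linear_left[OF assms r_var_mono[OF assms(1)]])
  finally show ?thesis .
qed

lemma r_mon_unit_mon_right:
  assumes "finite V" "keys \<alpha> \<subseteq> V"
  shows "r_mon \<alpha> (\<beta> + unit_mon i) = (\<Sum>m\<in>V. q m i * of_nat (lookup \<alpha> m) * r_mon (\<alpha> - unit_mon m) \<beta>)"
proof -
  have "mono (\<beta> + unit_mon i) = var i * mono \<beta>"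
    by (simp add: mono_add var_eq_mono mult.commute)
  then have "r_mon \<alpha> (\<beta> + unit_mon i)
      = sweedler2 emb (\<lambda>a' a''. r (tens a' (var i)) * r (tens a'' (mono \<beta>))) (Delta (mono \<alpha>))"
    by (simp add: r_mon_def r_tens_mult_right)
  also have "\<dots> = (\<Sum>m\<in>V. q m i * of_nat (lookup \<alpha> m) * r_mon (\<alpha> - unit_mon m) \<beta>)"
    unfolding r_mon_def by (rule sweedler2_Delta_mono_linear_left[OF assms r_mono_var[OF assms(1)]])
  finally show ?thesis .
qed

definition r_tensor_id :: "V0V0V0 \<Rightarrow> 'a V0A" where
  "r_tensor_id u = (\<Sum>p\<in>keys u. single (snd (snd p)) (emb (lookup u p) * r_mon (fst p) (fst (snd p))))"

lemma EQ_eq_r_tensor_id: "EQ emb r f = r_tensor_id (Delta2 f)"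
  unfolding EQ_def r_tensor_id_def Let_def r_mon_def by (simp add: split_beta)

lemma r_tensor_id_add: "r_tensor_id (u + v) = r_tensor_id u + r_tensor_id v"
  unfolding r_tensor_id_def by (rule sum_keys_lookup_add) (simp_all add: emb_add distrib_right single_add)

lemma r_tensor_id_zero [simp]: "r_tensor_id 0 = 0"
  by (simp add: r_tensor_id_def)

lemma r_tensor_id_single [simp]:
  "r_tensor_id (single p c) = single (snd (snd p)) (emb c * r_mon (fst p) (fst (snd p)))"
  unfolding r_tensor_id_def by (subst sum_keys_lookup_single) simp_all

lemma r_tensor_id_of_nat_mult: "r_tensor_id (of_nat k * u) = of_nat k * r_tensor_id u"
  by (rule additive_map_of_nat_mult) (simp_all add: r_tensor_id_add)

lemma r_tensor_id_const_mult: "r_tensor_id (single 0 c * u) = single 0 (emb c) * r_tensor_id u"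
  by (rule additive_maps_eqI[where u = u and L = "\<lambda>u. r_tensor_id (single 0 c * u)"])
    (simp_all add: r_tensor_id_add distrib_left mult_single emb_mult mult.assoc)

lemma r_tensor_id_mult_third: "r_tensor_id (single (0, 0, unit_mon i) 1 * u) = single (unit_mon i) 1 * r_tensor_id u"
  by (rule additive_maps_eqI[where u = u and L = "\<lambda>u. r_tensor_id (single (0, 0, unit_mon i) 1 * u)"])
    (simp_all add: r_tensor_id_add distrib_left mult_single)

lemma r_tensor_id_mult_first:
  assumes "finite V" and "\<And>p. p \<in> keys u \<Longrightarrow> keys (fst (snd p)) \<subseteq> V"
  shows "r_tensor_id (single (unit_mon i, 0, 0) 1 * u) = (\<Sum>n\<in>V. single 0 (q i n) * r_tensor_id (partial_snd n u))"
proof (rule additive_maps_eqI[where u = u and L = "\<lambda>u. r_tensor_id (single (unit_mon i, 0, 0) 1 * u)"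
      and M = "\<lambda>u. \<Sum>n\<in>V. single 0 (q i n) * r_tensor_id (partial_snd n u)"])
  fix p assume p: "p \<in> keys u"
  obtain \<mu> \<nu> \<gamma> where [simp]: "p = (\<mu>, \<nu>, \<gamma>)" by (cases p)
  have "keys \<nu> \<subseteq> V" using assms(2)[OF p] by simp
  then show "r_tensor_id (single (unit_mon i, 0, 0) 1 * single p (lookup u p))
      = (\<Sum>n\<in>V. single 0 (q i n) * r_tensor_id (partial_snd n (single p (lookup u p))))"
    by (simp add: mult_single r_mon_unit_mon_left[OF assms(1)] sum_distrib_left single_sum emb_mult
        algebra_simps)
qed (simp_all add: r_tensor_id_add distrib_left shift_deriv_add sum.distrib)

lemma r_tensor_id_mult_second:
  assumes "finite V" and "\<And>p. p \<in> keys u \<Longrightarrow> keys (fst p) \<subseteq> V"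
  shows "r_tensor_id (single (0, unit_mon i, 0) 1 * u) = (\<Sum>m\<in>V. single 0 (q m i) * r_tensor_id (partial_fst m u))"
proof (rule additive_maps_eqI[where u = u and L = "\<lambda>u. r_tensor_id (single (0, unit_mon i, 0) 1 * u)"
      and M = "\<lambda>u. \<Sum>m\<in>V. single 0 (q m i) * r_tensor_id (partial_fst m u)"])
  fix p assume p: "p \<in> keys u"
  obtain \<mu> \<nu> \<gamma> where [simp]: "p = (\<mu>, \<nu>, \<gamma>)" by (cases p)
  have "keys \<mu> \<subseteq> V" using assms(2)[OF p] by simp
  then show "r_tensor_id (single (0, unit_mon i, 0) 1 * single p (lookup u p))
      = (\<Sum>m\<in>V. single 0 (q m i) * r_tensor_id (partial_fst m (single p (lookup u p))))"
    by (simp add: mult_single r_mon_unit_mon_right[OF assms(1)] sum_distrib_left single_sum emb_mult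
        algebra_simps)
qed (simp_all add: r_tensor_id_add distrib_left shift_deriv_add sum.distrib)

lemma EQ_add: "EQ emb r (f + g) = EQ emb r f + EQ emb r g"
  by (simp add: EQ_eq_r_tensor_id Delta2_add r_tensor_id_add)

lemma EQ_zero: "EQ emb r 0 = 0"
  by (simp add: EQ_eq_r_tensor_id Delta2_def peval_def)

lemma EQ_single: "EQ emb r (single \<alpha> c) = single 0 (emb c) * EQ emb r (mono \<alpha>)"
  by (simp add: EQ_eq_r_tensor_id Delta2_single Delta2_mono r_tensor_id_const_mult)

lemma EQ_expand: "EQ emb r f = (\<Sum>\<alpha>\<in>keys f. single 0 (emb (lookup f \<alpha>)) * EQ emb r (mono \<alpha>))"
proof -
  have "EQ emb r (\<Sum>\<alpha>\<in>keys f. single \<alpha> (lookup f \<alpha>)) = (\<Sum>\<alpha>\<in>keys f. EQ emb r (single \<alpha> (lookup f \<alpha>)))"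
    by (rule additive_map_sum) (simp_all add: EQ_add EQ_zero)
  then show ?thesis
    by (simp add: poly_mapping_sum_singles EQ_single)
qed

lemma EQ_mono_zero: "EQ emb r (mono 0) = 1"
proof -
  have "r_mon 0 0 = 1"
    using counit_mono[of 0] by (simp add: r_mon_def mono_zero r_tens_one_left)
  then show ?thesis
    by (simp add: EQ_eq_r_tensor_id Delta2_mono flip: single_one)
qed

lemma EQ_mono_add_unit_mon:
  assumes "finite V" "keys \<alpha> \<subseteq> V"
  shows "EQ emb r (mono (\<alpha> + unit_mon i)) = single (unit_mon i) 1 * EQ emb r (mono \<alpha>)
    + (\<Sum>n\<in>V. single 0 (q i n + q n i) * (of_nat (lookup \<alpha> n) * EQ emb r (mono (\<alpha> - unit_mon n))))"
proof -
  let ?u = "Delta2 (mono \<alpha>)"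
  have keys_u: "keys (fst p) \<subseteq> V" "keys (fst (snd p)) \<subseteq> V" if "p \<in> keys ?u" for p
    using keys_Delta2_mono[OF that] assms(2) by blast+
  have first: "r_tensor_id (single (unit_mon i, 0, 0) 1 * ?u)
      = (\<Sum>n\<in>V. single 0 (q i n) * r_tensor_id (partial_snd n ?u))"
    using assms(1) keys_u(2) by (rule r_tensor_id_mult_first)
  have second: "r_tensor_id (single (0, unit_mon i, 0) 1 * ?u)
      = (\<Sum>n\<in>V. single 0 (q n i) * r_tensor_id (partial_fst n ?u))"
    using assms(1) keys_u(1) by (rule r_tensor_id_mult_second)
  have "Delta2 (mono (\<alpha> + unit_mon i)) = coprod2_var i * ?u"
    by (simp add: Delta2_mono mon_eval_add_unit_mon)
  then have "EQ emb r (mono (\<alpha> + unit_mon i)) = r_tensor_id (single (unit_mon i, 0, 0) 1 * ?u)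
      + r_tensor_id (single (0, unit_mon i, 0) 1 * ?u) + r_tensor_id (single (0, 0, unit_mon i) 1 * ?u)"
    by (simp add: EQ_eq_r_tensor_id coprod2_var_def distrib_right r_tensor_id_add)
  also have "\<dots> = (\<Sum>n\<in>V. single 0 (q i n) * (of_nat (lookup \<alpha> n) * EQ emb r (mono (\<alpha> - unit_mon n))))
      + (\<Sum>n\<in>V. single 0 (q n i) * (of_nat (lookup \<alpha> n) * EQ emb r (mono (\<alpha> - unit_mon n))))
      + single (unit_mon i) 1 * EQ emb r (mono \<alpha>)"
    unfolding first second
      r_tensor_id_mult_third partial_fst_Delta2_mono partial_snd_Delta2_mono r_tensor_id_of_nat_mult
      EQ_eq_r_tensor_id ..
  finally show ?thesis
    by (simp add: single_add distrib_right sum.distrib algebra_simps)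
qed

lemma EQ_mono_eq_expQ_on:
  assumes "finite V" "keys \<alpha> \<subseteq> V" "mon_deg \<alpha> \<le> N"
  shows "EQ emb r (mono \<alpha>) = expQ_on q V N (single \<alpha> 1)"
  using assms(2,3)
proof (induction "mon_deg \<alpha>" arbitrary: \<alpha> N rule: less_induct)
  case less
  show ?case
  proof (cases "\<alpha> = 0")
    case True
    have "expQ_on q V N (single 0 1) = expQ_on q V 0 (single 0 1)"
      using expQ_on_truncate[OF deg_le_single[of 0 1]] by simp
    with True show ?thesis
      by (simp add: EQ_mono_zero expQ_on_def)
  next
    case False
    then obtain i where "i \<in> keys \<alpha>" by (metis keys_eq_empty ex_in_conv)
    then have pos: "0 < lookup \<alpha> i" and "i \<in> V"
      using less.prems(1) by (auto simp: in_keys_iff)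
    define \<beta> where "\<beta> = \<alpha> - unit_mon i"
    have \<alpha>: "\<alpha> = \<beta> + unit_mon i"
      unfolding \<beta>_def using diff_unit_mon_add[OF pos] by simp
    have keys_\<beta>: "keys \<beta> \<subseteq> V"
      unfolding \<beta>_def using keys_diff_unit_mon less.prems(1) by blast
    obtain M where N: "N = Suc M" and deg_\<beta>: "mon_deg \<beta> \<le> M"
      using less.prems(2) \<alpha> by (cases N) auto
    have IH_\<beta>: "EQ emb r (mono \<beta>) = expQ_on q V (Suc M) (single \<beta> 1)"
      using less.hyps[of \<beta> "Suc M"] \<alpha> keys_\<beta> deg_\<beta> by simp
    have IH_partial: "of_nat (lookup \<beta> n) * EQ emb r (mono (\<beta> - unit_mon n))
        = of_nat (lookup \<beta> n) * expQ_on q V M (single (\<beta> - unit_mon n) 1)" for n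
    proof (cases "lookup \<beta> n = 0")
      case False
      then have "mon_deg (\<beta> - unit_mon n) < mon_deg \<beta>"
        using mon_deg_diff_unit_mon lookup_le_mon_deg[of \<beta> n] by simp
      then show ?thesis
        using less.hyps[of "\<beta> - unit_mon n" M] \<alpha> keys_\<beta> keys_diff_unit_mon deg_\<beta> by force
    qed simp
    have "EQ emb r (mono \<alpha>) = single (unit_mon i) 1 * expQ_on q V (Suc M) (single \<beta> 1)
        + (\<Sum>n\<in>V. single 0 (q i n + q n i) * (of_nat (lookup \<beta> n) * expQ_on q V M (single (\<beta> - unit_mon n) 1)))"
      by (simp add: \<alpha> EQ_mono_add_unit_mon[OF assms(1) keys_\<beta>] IH_\<beta> IH_partial)
    also have "\<dots> = expQ_on q V N (single \<alpha> 1)"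
      by (simp add: N \<alpha> expQ_on_single_add_unit_mon[OF assms(1) \<open>i \<in> V\<close>])
    finally show ?thesis .
  qed
qed

end

lemma keys_base_ext: "keys (base_ext emb f) \<subseteq> keys f"
  unfolding base_ext_def using keys_sum[of "\<lambda>\<alpha>. single \<alpha> (emb (lookup f \<alpha>))" "keys f"] by auto

theorem lemma3p2:
  fixes emb :: "complex \<Rightarrow> 'a::comm_ring_1"
    and r :: "V0V0 \<Rightarrow> 'a"
    and f :: V0
  assumes "calg_hom emb"
    and "bichar emb r"
  shows "EQ emb r f = expQ emb (\<lambda>m n. r (tens (var m) (var n))) (base_ext emb f)"
proof -
  interpret bicharacter emb r
    by unfold_locales (fact assms)+
  define V where "V = (\<Union>\<alpha>\<in>keys f. keys \<alpha>)"
  have "finite V"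
    by (simp add: V_def)
  have keys_V: "keys \<alpha> \<subseteq> V" and deg_f: "mon_deg \<alpha> \<le> tdeg f" if "\<alpha> \<in> keys f" for \<alpha>
    using that tdeg_le_iff_deg_le[of f "tdeg f"] by (auto simp: V_def deg_le_def)
  have "EQ emb r f = (\<Sum>\<alpha>\<in>keys f. single 0 (emb (lookup f \<alpha>)) * EQ emb r (mono \<alpha>))"
    by (rule EQ_expand)
  also have "\<dots> = (\<Sum>\<alpha>\<in>keys f. single 0 (emb (lookup f \<alpha>)) * expQ_on q V (tdeg f) (single \<alpha> 1))"
    by (intro sum.cong refl) (simp add: EQ_mono_eq_expQ_on[OF \<open>finite V\<close> keys_V deg_f])
  also have "\<dots> = expQ_on q V (tdeg f) (base_ext emb f)"
    unfolding base_ext_def expQ_on_sum by (simp add: mult_single flip: expQ_on_const_mult)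
  also have "\<dots> = expQ emb q (base_ext emb f)"
    using keys_base_ext[of emb f] keys_V deg_f
    by (intro expQ_eq_expQ_on[symmetric] \<open>finite V\<close>) (auto simp: vars_def deg_le_def)
  finally show ?thesis
    by (simp add: q_def[abs_def])
qed

end
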